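(* Let $\Lambda=K\mathcal{Q}/I$ be a finite-dimensional algebra over a field $K$ as in the context, let $A\geqslant1$ and let $\tilde{\Lambda}=\tilde{\Lambda}_A$ be its stretched algebra, $\varepsilon=\sum_{u\in\mathcal{Q}_0}u\in\tilde{\Lambda}$ and $B=\varepsilon\tilde{\Lambda}\varepsilon$. Let $w$ be a vertex of $\tilde{\mathcal{Q}}_A$ not in $\mathcal{Q}_0$, and let $v=\mathfrak{o}(\tilde{p}_w)$, $v'=\mathfrak{t}(\tilde{q}_w)$. Then: (1) $v'B\cong\tilde{q}_wB$ as right $B$-modules; (2) $v'\tilde{\Lambda}\cong\tilde{q}_w\tilde{\Lambda}$ as right $\tilde{\Lambda}$-modules; (3) $Bv\cong B\tilde{p}_w$ as left $B$-modules; (4) $\tilde{\Lambda}v\cong\tilde{\Lambda}\tilde{p}_w$ as left $\tilde{\Lambda}$-modules.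
   Context: Conventions: $\mathcal{Q}$ is a finite quiver with vertex set $\mathcal{Q}_0$; $\mathfrak{o}(\alpha)$, $\mathfrak{t}(\alpha)$ denote start and end of an arrow or path; paths are written left to right. An element $x\in K\mathcal{Q}$ is uniform if $x=vx=xv'$ for vertices $v,v'$. $\Lambda=K\mathcal{Q}/I$ is finite-dimensional with $I$ an admissible ideal generated by a minimal set $\{g^2_1,\dots,g^2_m\}$ of uniform elements. Stretched algebra: for $A\geqslant1$, the quiver $\tilde{\mathcal{Q}}_A$ has all vertices of $\mathcal{Q}$ plus, for each arrow $\alpha$ of $\mathcal{Q}$, new vertices $w_1,\dots,w_{A-1}$; each arrow $\alpha$ is replaced by arrows $\alpha_1,\dots,\alpha_A$ with $\mathfrak{o}(\alpha_1)=\mathfrak{o}(\alpha)$, $\mathfrak{t}(\alpha_j)=\mathfrak{o}(\alpha_{j+1})=w_j$ ($1\le j\le A-1$), $\mathfrak{t}(\alpha_A)=\mathfrak{t}(\alpha)$, and the only arrows incident with $w_j$ are $\alpha_j,\alpha_{j+1}$. $\theta^*:K\mathcal{Q}\to K\tilde{\mathcal{Q}}_A$ is the algebra homomorphism fixing vertices and sending $\alpha\mapsto\alpha_1\cdots\alpha_A$; $\tilde{I}_A$ is the ideal generated by $\theta^*(g^2_1),\dots,\theta^*(g^2_m)$; $\tilde{\Lambda}_A=K\tilde{\mathcal{Q}}_A/\tilde{I}_A$. For a new vertex $w=w_i$ on the path replacing the arrow $\alpha$, $\tilde{p}_w=\alpha_1\cdots\alpha_i$ and $\tilde{q}_w=\alpha_{i+1}\cdots\alpha_A$,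 viewed in $\tilde{\Lambda}$; thus $\mathfrak{o}(\tilde{p}_w)=\mathfrak{o}(\alpha)$, $\mathfrak{t}(\tilde{q}_w)=\mathfrak{t}(\alpha)$. *)

theory Defs
  imports "HOL-Algebra.QuotRing" "HOL-Algebra.FiniteProduct"
begin

text \<open>A path is a pair (v, as): its start vertex v and its list of arrows, read left
  to right; trivial paths are (v, []).\<close>

definition valid_path :: "'v set \<Rightarrow> 'e set \<Rightarrow> ('e \<Rightarrow> 'v) \<Rightarrow> ('e \<Rightarrow> 'v) \<Rightarrow> 'v \<times> 'e list \<Rightarrow> bool" where
  "valid_path V E s t p \<longleftrightarrow> fst p \<in> V \<and> set (snd p) \<subseteq> E \<and>
     (snd p \<noteq> [] \<longrightarrow> s (hd (snd p)) = fst p) \<and>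
     (\<forall>i. Suc i < length (snd p) \<longrightarrow> t (snd p ! i) = s (snd p ! Suc i))"

definition pend :: "('e \<Rightarrow> 'v) \<Rightarrow> 'v \<times> 'e list \<Rightarrow> 'v" where
  "pend t p = (if snd p = [] then fst p else t (last (snd p)))"

text \<open>The path algebra K Q: finitely supported K-valued functions on paths (coefficient
  vectors w.r.t. the path basis), with concatenation product.\<close>

definition path_alg :: "'v set \<Rightarrow> 'e set \<Rightarrow> ('e \<Rightarrow> 'v) \<Rightarrow> ('e \<Rightarrow> 'v)
    \<Rightarrow> ('v \<times> 'e list \<Rightarrow> 'k::field) ring" where
  "path_alg V E s t =
    \<lparr>carrier = {f. finite {p. f p \<noteq> 0} \<and> (\<forall>p. f p \<noteq> 0 \<longrightarrow> valid_path V E s t p)},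
     monoid.mult = (\<lambda>f g p. \<Sum>k\<in>{0..length (snd p)}.
        f (fst p, take k (snd p)) * g (pend t (fst p, take k (snd p)), drop k (snd p))),
     one = (\<lambda>p. if snd p = [] \<and> fst p \<in> V then 1 else 0),
     zero = (\<lambda>p. 0),
     add = (\<lambda>f g p. f p + g p)\<rparr>"

definition pbasis :: "'p \<Rightarrow> 'p \<Rightarrow> 'k::field" where
  "pbasis p = (\<lambda>q. if q = p then 1 else 0)"

text \<open>Elements of the arrow ideal power R^n: spans of paths of length at least n.\<close>
definition arrow_pow :: "'v set \<Rightarrow> 'e set \<Rightarrow> ('e \<Rightarrow> 'v) \<Rightarrow> ('e \<Rightarrow> 'v) \<Rightarrow> nat
    \<Rightarrow> ('v \<times> 'e list \<Rightarrow> 'k::field) set" where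
  "arrow_pow V E s t n = {f \<in> carrier (path_alg V E s t). \<forall>p. f p \<noteq> 0 \<longrightarrow> n \<le> length (snd p)}"

definition admissible :: "'v set \<Rightarrow> 'e set \<Rightarrow> ('e \<Rightarrow> 'v) \<Rightarrow> ('e \<Rightarrow> 'v)
    \<Rightarrow> ('v \<times> 'e list \<Rightarrow> 'k::field) set \<Rightarrow> bool" where
  "admissible V E s t I \<longleftrightarrow> ideal I (path_alg V E s t) \<and>
     (\<exists>N\<ge>2. arrow_pow V E s t N \<subseteq> I) \<and> I \<subseteq> arrow_pow V E s t 2"

definition uniform :: "'v set \<Rightarrow> 'e set \<Rightarrow> ('e \<Rightarrow> 'v) \<Rightarrow> ('e \<Rightarrow> 'v)
    \<Rightarrow> ('v \<times> 'e list \<Rightarrow> 'k::field) \<Rightarrow> bool" where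
  "uniform V E s t x \<longleftrightarrow> x \<in> carrier (path_alg V E s t) \<and>
     (\<exists>v\<in>V. \<exists>v'\<in>V. x = monoid.mult (path_alg V E s t) (pbasis (v, [])) x \<and>
                     x = monoid.mult (path_alg V E s t) x (pbasis (v', [])))"

datatype ('v, 'a) svert = Old 'v | New 'a nat

definition sV :: "nat \<Rightarrow> 'v set \<Rightarrow> 'a set \<Rightarrow> ('v, 'a) svert set" where
  "sV A V E = Old ` V \<union> {New \<alpha> j | \<alpha> j. \<alpha> \<in> E \<and> 1 \<le> j \<and> j \<le> A - 1}"

definition sE :: "nat \<Rightarrow> 'a set \<Rightarrow> ('a \<times> nat) set" where
  "sE A E = {(\<alpha>, j) | \<alpha> j. \<alpha> \<in> E \<and> 1 \<le> j \<and> j \<le> A}"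

definition ss :: "nat \<Rightarrow> ('a \<Rightarrow> 'v) \<Rightarrow> 'a \<times> nat \<Rightarrow> ('v, 'a) svert" where
  "ss A s e = (if snd e = 1 then Old (s (fst e)) else New (fst e) (snd e - 1))"

definition st :: "nat \<Rightarrow> ('a \<Rightarrow> 'v) \<Rightarrow> 'a \<times> nat \<Rightarrow> ('v, 'a) svert" where
  "st A t e = (if snd e = A then Old (t (fst e)) else New (fst e) (snd e))"

definition stretch_path :: "nat \<Rightarrow> 'v \<times> 'a list \<Rightarrow> ('v, 'a) svert \<times> ('a \<times> nat) list" where
  "stretch_path A p = (Old (fst p), concat (map (\<lambda>\<alpha>. map (\<lambda>j. (\<alpha>, j)) [1..<Suc A]) (snd p)))"

text \<open>theta*: the linear extension of the path map v |-> v, alpha |-> alpha_1 ... alpha_A.\<close>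
definition theta :: "nat \<Rightarrow> ('v \<times> 'a list \<Rightarrow> 'k::field)
    \<Rightarrow> (('v, 'a) svert \<times> ('a \<times> nat) list \<Rightarrow> 'k)" where
  "theta A f = (\<lambda>q. \<Sum>p\<in>{p. f p \<noteq> 0 \<and> stretch_path A p = q}. f p)"

definition sR :: "nat \<Rightarrow> 'v set \<Rightarrow> 'a set \<Rightarrow> ('a \<Rightarrow> 'v) \<Rightarrow> ('a \<Rightarrow> 'v)
    \<Rightarrow> (('v, 'a) svert \<times> ('a \<times> nat) list \<Rightarrow> 'k::field) ring" where
  "sR A V E s t = path_alg (sV A V E) (sE A E) (ss A s) (st A t)"

definition sI :: "nat \<Rightarrow> 'v set \<Rightarrow> 'a set \<Rightarrow> ('a \<Rightarrow> 'v) \<Rightarrow> ('a \<Rightarrow> 'v)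
    \<Rightarrow> ('v \<times> 'a list \<Rightarrow> 'k::field) set
    \<Rightarrow> (('v, 'a) svert \<times> ('a \<times> nat) list \<Rightarrow> 'k) set" where
  "sI A V E s t G = genideal (sR A V E s t) (theta A ` G)"

definition sLam :: "nat \<Rightarrow> 'v set \<Rightarrow> 'a set \<Rightarrow> ('a \<Rightarrow> 'v) \<Rightarrow> ('a \<Rightarrow> 'v)
    \<Rightarrow> ('v \<times> 'a list \<Rightarrow> 'k::field) set
    \<Rightarrow> (('v, 'a) svert \<times> ('a \<times> nat) list \<Rightarrow> 'k) set ring" where
  "sLam A V E s t G = sR A V E s t Quot sI A V E s t G"

definition scls :: "nat \<Rightarrow> 'v set \<Rightarrow> 'a set \<Rightarrow> ('a \<Rightarrow> 'v) \<Rightarrow> ('a \<Rightarrow> 'v)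
    \<Rightarrow> ('v \<times> 'a list \<Rightarrow> 'k::field) set
    \<Rightarrow> ('v, 'a) svert \<times> ('a \<times> nat) list
    \<Rightarrow> (('v, 'a) svert \<times> ('a \<times> nat) list \<Rightarrow> 'k) set" where
  "scls A V E s t G p = a_r_coset (sR A V E s t) (sI A V E s t G) (pbasis p)"

text \<open>For a new vertex w = w_i on the path replacing alpha: the paths p~_w = alpha_1...alpha_i
  and q~_w = alpha_(i+1)...alpha_A (only used for new vertices).\<close>
definition pw_path :: "nat \<Rightarrow> ('a \<Rightarrow> 'v) \<Rightarrow> ('v, 'a) svert \<Rightarrow> ('v, 'a) svert \<times> ('a \<times> nat) list" where
  "pw_path A s w = (case w of New \<alpha> i \<Rightarrow> (Old (s \<alpha>), map (\<lambda>j. (\<alpha>, j)) [1..<Suc i])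
                             | Old v \<Rightarrow> (Old v, []))"

definition qw_path :: "nat \<Rightarrow> ('v, 'a) svert \<Rightarrow> ('v, 'a) svert \<times> ('a \<times> nat) list" where
  "qw_path A w = (case w of New \<alpha> i \<Rightarrow> (New \<alpha> i, map (\<lambda>j. (\<alpha>, j)) [Suc i..<Suc A])
                          | Old v \<Rightarrow> (Old v, []))"

text \<open>M and N are subsets of the ring R on which S (a subset of R) acts by right
  (resp. left) multiplication; an isomorphism is an additive bijection commuting with
  the action.\<close>
definition right_mod_iso :: "('r, 'm) ring_scheme \<Rightarrow> 'r set \<Rightarrow> 'r set \<Rightarrow> 'r set \<Rightarrow> bool" where
  "right_mod_iso R S M N \<longleftrightarrow> (\<exists>\<phi>. bij_betw \<phi> M N \<and>
     (\<forall>x\<in>M. \<forall>y\<in>M. \<phi> (add R x y) = add R (\<phi> x) (\<phi> y)) \<and>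
     (\<forall>x\<in>M. \<forall>b\<in>S. \<phi> (monoid.mult R x b) = monoid.mult R (\<phi> x) b))"

definition left_mod_iso :: "('r, 'm) ring_scheme \<Rightarrow> 'r set \<Rightarrow> 'r set \<Rightarrow> 'r set \<Rightarrow> bool" where
  "left_mod_iso R S M N \<longleftrightarrow> (\<exists>\<phi>. bij_betw \<phi> M N \<and>
     (\<forall>x\<in>M. \<forall>y\<in>M. \<phi> (add R x y) = add R (\<phi> x) (\<phi> y)) \<and>
     (\<forall>x\<in>M. \<forall>b\<in>S. \<phi> (monoid.mult R b x) = monoid.mult R b (\<phi> x)))"

end

theory Submission
  imports Defs "HOL-Algebra.Multiplicative_Group"
begin

text \<open>Let \<open>w = w\<^sub>j\<close> lie on the path \<open>\<alpha>\<^sub>1 \<dots> \<alpha>\<^sub>A\<close> replacing the arrow \<open>\<alpha>\<close>, so that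
  \<open>q\<^sub>w = \<alpha>\<^sub>j\<^sub>+\<^sub>1 \<dots> \<alpha>\<^sub>A\<close>, \<open>v' = t \<alpha>\<close>, \<open>p\<^sub>w = \<alpha>\<^sub>1 \<dots> \<alpha>\<^sub>j\<close> and \<open>v = s \<alpha>\<close>.
  Since \<open>q\<^sub>w v' = q\<^sub>w\<close>, left multiplication by \<open>q\<^sub>w\<close> maps \<open>v' X\<close> onto \<open>q\<^sub>w X\<close> for \<open>X\<close> the
  stretched algebra or \<open>B\<close>; it is injective because the stretched ideal \<open>I\<close> cancels \<open>q\<^sub>w\<close>:
  \<open>q\<^sub>w y \<in> I\<close> implies \<open>v' y \<in> I\<close>. Symmetrically for right multiplication by \<open>p\<^sub>w\<close>.

  For the cancellation, take the elements of an ideal \<open>K\<close> of the stretched path algebra that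
  vanish on the paths lying inside a stretched arrow and whose left quotients by the paths
  \<open>\<alpha>\<^sub>i\<^sub>+\<^sub>1 \<dots> \<alpha>\<^sub>A\<close> and right quotients by the paths \<open>\<alpha>\<^sub>1 \<dots> \<alpha>\<^sub>i\<close> again lie in \<open>K\<close>.
  A Leibniz rule for these quotients shows that they form an ideal (the vanishing condition kills
  the cross terms), and it contains every generator \<open>\<theta>\<^sup>*(g)\<close>, whose paths start and end at old
  vertices. So for \<open>K = I\<close> it is all of \<open>I\<close>, and the left quotient of \<open>q\<^sub>w y\<close> by \<open>q\<^sub>w\<close> is
  \<open>v' y\<close>.\<close>

section \<open>Path algebras\<close>

lemma pend_Nil [simp]: "pend t (v, []) = v"
  by (simp add: pend_def)

lemma pend_Cons [simp]: "pend t (v, e # es) = pend t (t e, es)"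
  by (simp add: pend_def)

lemma pend_append: "pend t (v, xs @ ys) = pend t (pend t (v, xs), ys)"
  by (induction xs arbitrary: v) auto

locale quiver =
  fixes V :: "'v set" and E :: "'e set" and s t :: "'e \<Rightarrow> 'v"
  assumes finite_vertices: "finite V" and targets_in: "t ` E \<subseteq> V"
begin

abbreviation is_path :: "'v \<times> 'e list \<Rightarrow> bool" where
  "is_path \<equiv> valid_path V E s t"

abbreviation KQ :: "('v \<times> 'e list \<Rightarrow> 'k::field) ring" where
  "KQ \<equiv> path_alg V E s t"

lemma is_path_Nil [simp]: "is_path (v, []) \<longleftrightarrow> v \<in> V"
  by (simp add: valid_path_def)

lemma is_path_Cons: "is_path (v, e # es) \<longleftrightarrow> v \<in> V \<and> e \<in> E \<and> s e = v \<and> is_path (t e, es)"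
proof -
  have "(\<forall>i. Suc i < length (e # es) \<longrightarrow> t ((e # es) ! i) = s ((e # es) ! Suc i)) \<longleftrightarrow>
        (es \<noteq> [] \<longrightarrow> t e = s (hd es)) \<and> (\<forall>i. Suc i < length es \<longrightarrow> t (es ! i) = s (es ! Suc i))"
    (is "?L \<longleftrightarrow> ?R")
  proof
    assume r: ?R
    show ?L
    proof (intro allI impI)
      fix i assume "Suc i < length (e # es)"
      then show "t ((e # es) ! i) = s ((e # es) ! Suc i)"
        using r by (cases i) (auto simp: hd_conv_nth)
    qed
  qed (auto simp: hd_conv_nth)
  moreover have "e \<in> E \<Longrightarrow> t e \<in> V"
    using targets_in by auto
  ultimately show ?thesis
    by (auto simp: valid_path_def)
qed

lemma is_path_append: "is_path (v, xs @ ys) \<longleftrightarrow> is_path (v, xs) \<and> is_path (pend t (v, xs), ys)"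
proof (induction xs arbitrary: v)
  case Nil
  then show ?case by (cases ys) (auto simp: is_path_Cons)
qed (auto simp: is_path_Cons)

lemma is_path_start: "is_path p \<Longrightarrow> fst p \<in> V"
  by (simp add: valid_path_def)

lemma is_path_end: "is_path (v, xs) \<Longrightarrow> pend t (v, xs) \<in> V"
  by (induction xs arbitrary: v) (auto simp: is_path_Cons)

lemma carrier_path_alg: "f \<in> carrier KQ \<longleftrightarrow> finite {p. f p \<noteq> 0} \<and> (\<forall>p. f p \<noteq> 0 \<longrightarrow> is_path p)"
  by (simp add: path_alg_def)

lemma mult_path_alg: "f \<otimes>\<^bsub>KQ\<^esub> g = (\<lambda>p. \<Sum>k\<in>{0..length (snd p)}.
    f (fst p, take k (snd p)) * g (pend t (fst p, take k (snd p)), drop k (snd p)))"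
  by (simp add: path_alg_def)

lemma add_path_alg: "f \<oplus>\<^bsub>KQ\<^esub> g = (\<lambda>p. f p + g p)"
  by (simp add: path_alg_def)

lemma zero_path_alg: "\<zero>\<^bsub>KQ\<^esub> = (\<lambda>p. 0)"
  by (simp add: path_alg_def)

lemma one_path_alg: "\<one>\<^bsub>KQ\<^esub> = (\<lambda>p. if snd p = [] \<and> fst p \<in> V then 1 else 0)"
  by (simp add: path_alg_def)

text \<open>Both sides of associativity sum over the ways of cutting a path into three consecutive pieces.\<close>

lemma mult_path_alg_assoc:
  fixes x y z :: "'v \<times> 'e list \<Rightarrow> 'k::field"
  shows "(x \<otimes>\<^bsub>KQ\<^esub> y) \<otimes>\<^bsub>KQ\<^esub> z = x \<otimes>\<^bsub>KQ\<^esub> (y \<otimes>\<^bsub>KQ\<^esub> z)"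
proof
  fix p :: "'v \<times> 'e list"
  obtain v xs where p: "p = (v, xs)" by (cases p)
  define n where "n = length xs"
  define T where "T i j = x (v, take i xs) * y (pend t (v, take i xs), take j (drop i xs)) *
      z (pend t (v, take (i + j) xs), drop (i + j) xs)" for i j
  have "((x \<otimes>\<^bsub>KQ\<^esub> y) \<otimes>\<^bsub>KQ\<^esub> z) p = (\<Sum>k\<le>n. (\<Sum>i\<le>k. x (v, take i xs) *
      y (pend t (v, take i xs), take (k - i) (drop i xs))) * z (pend t (v, take k xs), drop k xs))"
    unfolding mult_path_alg p n_def fst_conv snd_conv atLeast0AtMost
    by (intro sum.cong refl) (simp add: drop_take min_absorb1 min_absorb2)
  also have "\<dots> = (\<Sum>k\<le>n. \<Sum>i\<le>k. T i (k - i))"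
    unfolding T_def sum_distrib_right by (intro sum.cong refl) simp
  also have "\<dots> = (\<Sum>(i, j)\<in>{(i, j). i + j \<le> n}. T i j)"
    by (rule sum.triangle_reindex_eq[symmetric])
  also have "\<dots> = (\<Sum>(i, j)\<in>Sigma {..n} (\<lambda>i. {..n - i}). T i j)"
    by (intro sum.cong refl) auto
  also have "\<dots> = (\<Sum>i\<le>n. \<Sum>j\<le>n - i. T i j)"
    by (rule sum.Sigma[symmetric]) auto
  also have "\<dots> = (x \<otimes>\<^bsub>KQ\<^esub> (y \<otimes>\<^bsub>KQ\<^esub> z)) p"
    unfolding mult_path_alg p n_def T_def atLeast0AtMost sum_distrib_left fst_conv snd_conv
    by (intro sum.cong refl)
      (simp_all add: pend_append[symmetric] take_add[symmetric] mult.assoc add.commute)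
  finally show "((x \<otimes>\<^bsub>KQ\<^esub> y) \<otimes>\<^bsub>KQ\<^esub> z) p = (x \<otimes>\<^bsub>KQ\<^esub> (y \<otimes>\<^bsub>KQ\<^esub> z)) p" .
qed

lemma mult_path_alg_nonzero:
  fixes f g :: "'v \<times> 'e list \<Rightarrow> 'k::field"
  assumes "(f \<otimes>\<^bsub>KQ\<^esub> g) (v, xs) \<noteq> 0"
  obtains k where "f (v, take k xs) \<noteq> 0" and "g (pend t (v, take k xs), drop k xs) \<noteq> 0"
proof -
  from assms obtain k where "f (v, take k xs) * g (pend t (v, take k xs), drop k xs) \<noteq> 0"
    unfolding mult_path_alg by (auto elim: sum.not_neutral_contains_not_neutral)
  then show ?thesis
    using that by simp blast
qed

lemma mult_path_alg_closed:
  fixes f g :: "'v \<times> 'e list \<Rightarrow> 'k::field"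
  assumes f: "f \<in> carrier KQ" and g: "g \<in> carrier KQ"
  shows "f \<otimes>\<^bsub>KQ\<^esub> g \<in> carrier KQ"
proof -
  let ?concat = "\<lambda>(a :: 'v \<times> 'e list, b :: 'v \<times> 'e list). (fst a, snd a @ snd b)"
  let ?supp = "?concat ` ({p. f p \<noteq> 0} \<times> {p. g p \<noteq> 0})"
  have supp: "(v, xs) \<in> ?supp" and path: "is_path (v, xs)"
    if nonzero: "(f \<otimes>\<^bsub>KQ\<^esub> g) (v, xs) \<noteq> 0" for v xs
  proof -
    obtain k where k: "f (v, take k xs) \<noteq> 0" "g (pend t (v, take k xs), drop k xs) \<noteq> 0"
      using nonzero by (rule mult_path_alg_nonzero)
    have "?concat ((v, take k xs), (pend t (v, take k xs), drop k xs)) \<in> ?supp"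
      using k by (intro imageI) simp
    then show "(v, xs) \<in> ?supp"
      by simp
    have "is_path (v, take k xs @ drop k xs)"
      using f g k unfolding carrier_path_alg is_path_append by blast
    then show "is_path (v, xs)"
      by simp
  qed
  have "finite ({p. f p \<noteq> 0} \<times> {p. g p \<noteq> 0})"
    using f g unfolding carrier_path_alg by blast
  then have "finite ?supp"
    by (rule finite_imageI)
  moreover have "{p. (f \<otimes>\<^bsub>KQ\<^esub> g) p \<noteq> 0} \<subseteq> ?supp"
    using supp by auto
  ultimately show ?thesis
    using path unfolding carrier_path_alg by (auto intro: finite_subset)
qed

lemma mult_path_alg_append:
  fixes f g :: "'v \<times> 'e list \<Rightarrow> 'k::field"
  shows "(f \<otimes>\<^bsub>KQ\<^esub> g) (v, xs @ ys) =
    (\<Sum>k<length xs. f (v, take k xs) * g (pend t (v, take k xs), drop k xs @ ys)) +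
    (\<Sum>k\<le>length ys. f (v, xs @ take k ys) * g (pend t (v, xs @ take k ys), drop k ys))"
proof -
  define T where "T k = f (v, take k (xs @ ys)) * g (pend t (v, take k (xs @ ys)), drop k (xs @ ys))"
    for k
  have "(f \<otimes>\<^bsub>KQ\<^esub> g) (v, xs @ ys) = (\<Sum>k\<in>{0..length xs + length ys}. T k)"
    unfolding mult_path_alg T_def by simp
  also have "{0..length xs + length ys} = {0..<length xs} \<union> {0 + length xs..length ys + length xs}"
    by auto
  also have "(\<Sum>k\<in>\<dots>. T k) = (\<Sum>k\<in>{0..<length xs}. T k) + (\<Sum>k\<in>{0 + length xs..length ys + length xs}. T k)"
    by (rule sum.union_disjoint) auto
  also have "\<dots> = (\<Sum>k\<in>{0..<length xs}. T k) + (\<Sum>k\<in>{0..length ys}. T (k + length xs))"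
    by (simp only: sum.shift_bounds_cl_nat_ivl)
  finally show ?thesis
    by (simp add: T_def atLeast0LessThan atLeast0AtMost)
qed

lemma mult_trivial_paths_left:
  fixes f :: "'v \<times> 'e list \<Rightarrow> 'k::field"
  shows "(\<lambda>p. if snd p = [] \<and> fst p \<in> U then 1 else 0) \<otimes>\<^bsub>KQ\<^esub> f = (\<lambda>p. if fst p \<in> U then f p else 0)"
proof
  fix p :: "'v \<times> 'e list"
  obtain v xs where p: "p = (v, xs)" by (cases p)
  have "take k xs \<noteq> []" if "k \<in> {1..length xs}" for k
    using that by (cases xs) auto
  then have "(\<Sum>k\<in>{1..length xs}. (if take k xs = [] \<and> v \<in> U then 1 else 0) *
                f (pend t (v, take k xs), drop k xs)) = (0 :: 'k)"
    by (intro sum.neutral) simp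
  moreover have "{0..length xs} = insert 0 {1..length xs}"
    by auto
  ultimately show "((\<lambda>p. if snd p = [] \<and> fst p \<in> U then 1 else 0) \<otimes>\<^bsub>KQ\<^esub> f) p =
                   (if fst p \<in> U then f p else 0)"
    unfolding mult_path_alg p by simp
qed

lemma mult_trivial_paths_right:
  fixes f :: "'v \<times> 'e list \<Rightarrow> 'k::field"
  shows "f \<otimes>\<^bsub>KQ\<^esub> (\<lambda>p. if snd p = [] \<and> fst p \<in> U then 1 else 0) = (\<lambda>p. if pend t p \<in> U then f p else 0)"
proof
  fix p :: "'v \<times> 'e list"
  obtain v xs where p: "p = (v, xs)" by (cases p)
  have "(\<Sum>k\<in>{0..<length xs}. f (v, take k xs) *
           (if drop k xs = [] \<and> pend t (v, take k xs) \<in> U then 1 else 0)) = (0 :: 'k)"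
    by (intro sum.neutral) simp
  moreover have "{0..length xs} = insert (length xs) {0..<length xs}"
    by auto
  ultimately show "(f \<otimes>\<^bsub>KQ\<^esub> (\<lambda>p. if snd p = [] \<and> fst p \<in> U then 1 else 0)) p =
                   (if pend t p \<in> U then f p else 0)"
    unfolding mult_path_alg p by simp
qed

lemma pbasis_trivial_path: "pbasis (u, []) = (\<lambda>p. if snd p = [] \<and> fst p \<in> {u} then 1 else 0)"
  by (auto simp: pbasis_def fun_eq_iff)

lemma mult_vertex_left:
  fixes f :: "'v \<times> 'e list \<Rightarrow> 'k::field"
  shows "pbasis (u, []) \<otimes>\<^bsub>KQ\<^esub> f = (\<lambda>p. if fst p = u then f p else 0)"
  unfolding pbasis_trivial_path mult_trivial_paths_left by simp

lemma mult_vertex_right: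
  fixes f :: "'v \<times> 'e list \<Rightarrow> 'k::field"
  shows "f \<otimes>\<^bsub>KQ\<^esub> pbasis (u, []) = (\<lambda>p. if pend t p = u then f p else 0)"
  unfolding pbasis_trivial_path mult_trivial_paths_right by simp

lemma pbasis_vertex_idem: "pbasis (u, []) \<otimes>\<^bsub>KQ\<^esub> pbasis (u, []) = (pbasis (u, []) :: _ \<Rightarrow> 'k::field)"
  unfolding mult_vertex_left by (auto simp: pbasis_def)

lemma path_alg_l_one:
  fixes f :: "'v \<times> 'e list \<Rightarrow> 'k::field"
  assumes "f \<in> carrier KQ"
  shows "\<one>\<^bsub>KQ\<^esub> \<otimes>\<^bsub>KQ\<^esub> f = f"
  using assms is_path_start
  unfolding one_path_alg mult_trivial_paths_left carrier_path_alg by fastforce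

lemma path_alg_r_one:
  fixes f :: "'v \<times> 'e list \<Rightarrow> 'k::field"
  assumes "f \<in> carrier KQ"
  shows "f \<otimes>\<^bsub>KQ\<^esub> \<one>\<^bsub>KQ\<^esub> = f"
  using assms is_path_end
  unfolding one_path_alg mult_trivial_paths_right carrier_path_alg by (fastforce simp del: pend_Cons)

lemma pbasis_closed: "is_path p \<Longrightarrow> (pbasis p :: 'v \<times> 'e list \<Rightarrow> 'k::field) \<in> carrier KQ"
  by (simp add: carrier_path_alg pbasis_def)

lemma one_path_alg_closed: "(\<one>\<^bsub>KQ\<^esub> :: 'v \<times> 'e list \<Rightarrow> 'k::field) \<in> carrier KQ"
proof -
  have "{p. (\<one>\<^bsub>KQ\<^esub> :: 'v \<times> 'e list \<Rightarrow> 'k) p \<noteq> 0} = (\<lambda>v. (v, [])) ` V"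
    by (auto simp: one_path_alg)
  then show ?thesis
    using finite_vertices unfolding carrier_path_alg by (auto simp: one_path_alg)
qed

lemma add_path_alg_closed:
  fixes f g :: "'v \<times> 'e list \<Rightarrow> 'k::field"
  assumes "f \<in> carrier KQ" and "g \<in> carrier KQ"
  shows "f \<oplus>\<^bsub>KQ\<^esub> g \<in> carrier KQ"
proof -
  have "{p. f p + g p \<noteq> 0} \<subseteq> {p. f p \<noteq> 0} \<union> {p. g p \<noteq> 0}"
    by auto
  moreover have "finite ({p. f p \<noteq> 0} \<union> {p. g p \<noteq> 0})"
    using assms unfolding carrier_path_alg by blast
  ultimately have "finite {p. f p + g p \<noteq> 0}"
    by (rule finite_subset)
  moreover have "is_path p" if "f p + g p \<noteq> 0" for p
    using assms that unfolding carrier_path_alg by (metis add.right_neutral)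
  ultimately show ?thesis
    unfolding carrier_path_alg add_path_alg by blast
qed

lemma zero_path_alg_closed: "(\<zero>\<^bsub>KQ\<^esub> :: 'v \<times> 'e list \<Rightarrow> 'k::field) \<in> carrier KQ"
  by (simp add: carrier_path_alg zero_path_alg)

lemma uminus_path_alg_closed: "(f :: 'v \<times> 'e list \<Rightarrow> 'k::field) \<in> carrier KQ \<Longrightarrow> (\<lambda>p. - f p) \<in> carrier KQ"
  by (simp add: carrier_path_alg)

lemma ring_path_alg: "ring (KQ :: ('v \<times> 'e list \<Rightarrow> 'k::field) ring)"
proof (rule ringI)
  show "abelian_group (KQ :: ('v \<times> 'e list \<Rightarrow> 'k) ring)"
  proof (rule abelian_groupI)
    fix x :: "'v \<times> 'e list \<Rightarrow> 'k" assume "x \<in> carrier KQ"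
    then show "\<exists>y\<in>carrier KQ. y \<oplus>\<^bsub>KQ\<^esub> x = \<zero>\<^bsub>KQ\<^esub>"
      by (intro bexI[OF _ uminus_path_alg_closed]) (simp_all add: add_path_alg zero_path_alg)
  next
    fix x y z :: "'v \<times> 'e list \<Rightarrow> 'k"
    show "x \<oplus>\<^bsub>KQ\<^esub> y \<oplus>\<^bsub>KQ\<^esub> z = x \<oplus>\<^bsub>KQ\<^esub> (y \<oplus>\<^bsub>KQ\<^esub> z)"
      and "x \<oplus>\<^bsub>KQ\<^esub> y = y \<oplus>\<^bsub>KQ\<^esub> x" and "\<zero>\<^bsub>KQ\<^esub> \<oplus>\<^bsub>KQ\<^esub> x = x"
      by (simp_all add: add_path_alg zero_path_alg add_ac)
  qed (simp_all add: add_path_alg_closed zero_path_alg_closed)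
  show "monoid (KQ :: ('v \<times> 'e list \<Rightarrow> 'k) ring)"
    by (rule monoidI) (simp_all add: mult_path_alg_closed one_path_alg_closed path_alg_l_one
                                     path_alg_r_one mult_path_alg_assoc)
qed (simp_all add: mult_path_alg add_path_alg sum.distrib[symmetric] distrib_left distrib_right)

lemma a_inv_path_alg:
  fixes f :: "'v \<times> 'e list \<Rightarrow> 'k::field"
  assumes "f \<in> carrier KQ"
  shows "\<ominus>\<^bsub>KQ\<^esub> f = (\<lambda>p. - f p)"
proof -
  interpret ring KQ by (rule ring_path_alg)
  show ?thesis
    using minus_equality[OF _ assms uminus_path_alg_closed[OF assms]]
    by (simp add: add_path_alg zero_path_alg)
qed

lemma ideal_scale_closed:
  fixes f :: "'v \<times> 'e list \<Rightarrow> 'k::field"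
  assumes K: "ideal K KQ" and f: "f \<in> K"
  shows "(\<lambda>p. c * f p) \<in> K"
proof -
  have fc: "f \<in> carrier KQ"
    by (rule ideal.Icarr[OF K f])
  define c1 :: "'v \<times> 'e list \<Rightarrow> 'k" where "c1 = (\<lambda>p. c * \<one>\<^bsub>KQ\<^esub> p)"
  have "c1 \<in> carrier KQ"
    using one_path_alg_closed unfolding c1_def carrier_path_alg
    by (auto elim: finite_subset[rotated])
  moreover have "c1 \<otimes>\<^bsub>KQ\<^esub> f = (\<lambda>p. c * (\<one>\<^bsub>KQ\<^esub> \<otimes>\<^bsub>KQ\<^esub> f) p)"
    unfolding c1_def mult_path_alg by (simp add: sum_distrib_left mult.assoc)
  ultimately show ?thesis
    using ideal.I_l_closed[OF K f] path_alg_l_one[OF fc] by metis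
qed

lemma ideal_lincomb_closed:
  fixes X :: "'i \<Rightarrow> 'v \<times> 'e list \<Rightarrow> 'k::field"
  assumes K: "ideal K KQ" and "finite S" and "\<And>l. l \<in> S \<Longrightarrow> X l \<in> K"
  shows "(\<lambda>p. \<Sum>l\<in>S. c l * X l p) \<in> K"
  using assms(2,3)
proof (induction S rule: finite_induct)
  case empty
  then show ?case
    using additive_subgroup.zero_closed[OF ideal.axioms(1)[OF K]] by (simp add: zero_path_alg)
next
  case (insert a F)
  then have "(\<lambda>p. c a * X a p) \<oplus>\<^bsub>KQ\<^esub> (\<lambda>p. \<Sum>l\<in>F. c l * X l p) \<in> K"
    by (intro additive_subgroup.a_closed[OF ideal.axioms(1)[OF K]] ideal_scale_closed[OF K]) auto
  then show ?case
    using insert.hyps by (simp add: add_path_alg)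
qed

end

section \<open>Isomorphisms given by multiplication in a ring\<close>

lemma (in ideal) rcos_eq_zero_iff: "x \<in> carrier R \<Longrightarrow> I +> x = \<zero>\<^bsub>R Quot I\<^esub> \<longleftrightarrow> x \<in> I"
  using rcos_const_imp_mem a_rcos_zero[OF is_ideal] by (auto simp: FactRing_def)

lemma (in ideal) carrier_quotient: "carrier (R Quot I) = (+>) I ` carrier R"
  by (auto simp: FactRing_def A_RCOSETS_def')

lemma (in ideal) quotient_cancel_left:
  assumes a: "a \<in> carrier R" and e: "e \<in> carrier R"
    and cancel: "\<And>y. y \<in> carrier R \<Longrightarrow> a \<otimes> (e \<otimes> y) \<in> I \<Longrightarrow> e \<otimes> y \<in> I"
    and z: "z \<in> carrier (R Quot I)"
    and "(I +> a) \<otimes>\<^bsub>R Quot I\<^esub> ((I +> e) \<otimes>\<^bsub>R Quot I\<^esub> z) = \<zero>\<^bsub>R Quot I\<^esub>"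
  shows "(I +> e) \<otimes>\<^bsub>R Quot I\<^esub> z = \<zero>\<^bsub>R Quot I\<^esub>"
proof -
  obtain y where y: "y \<in> carrier R" and zy: "z = I +> y"
    using z carrier_quotient by auto
  have "I +> (a \<otimes> (e \<otimes> y)) = \<zero>\<^bsub>R Quot I\<^esub>"
    using assms(5) a e y by (simp add: zy ring_hom_mult[OF rcos_ring_hom])
  then have "e \<otimes> y \<in> I"
    using a e y by (intro cancel) (simp_all add: rcos_eq_zero_iff)
  then show ?thesis
    using e y by (simp add: zy rcos_eq_zero_iff flip: ring_hom_mult[OF rcos_ring_hom])
qed

lemma (in ideal) quotient_cancel_right:
  assumes a: "a \<in> carrier R" and e: "e \<in> carrier R"
    and cancel: "\<And>y. y \<in> carrier R \<Longrightarrow> (y \<otimes> e) \<otimes> a \<in> I \<Longrightarrow> y \<otimes> e \<in> I"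
    and z: "z \<in> carrier (R Quot I)"
    and "(z \<otimes>\<^bsub>R Quot I\<^esub> (I +> e)) \<otimes>\<^bsub>R Quot I\<^esub> (I +> a) = \<zero>\<^bsub>R Quot I\<^esub>"
  shows "z \<otimes>\<^bsub>R Quot I\<^esub> (I +> e) = \<zero>\<^bsub>R Quot I\<^esub>"
proof -
  obtain y where y: "y \<in> carrier R" and zy: "z = I +> y"
    using z carrier_quotient by auto
  have "I +> ((y \<otimes> e) \<otimes> a) = \<zero>\<^bsub>R Quot I\<^esub>"
    using assms(5) a e y by (simp add: zy ring_hom_mult[OF rcos_ring_hom])
  then have "y \<otimes> e \<in> I"
    using a e y by (intro cancel) (simp_all add: rcos_eq_zero_iff)
  then show ?thesis
    using e y by (simp add: zy rcos_eq_zero_iff flip: ring_hom_mult[OF rcos_ring_hom])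
qed

lemma right_mod_iso_left_mult:
  fixes L (structure)
  assumes "ring L" and q: "q \<in> carrier L" and e: "e \<in> carrier L" and qe: "q \<otimes> e = q"
    and cancel: "\<And>z. z \<in> carrier L \<Longrightarrow> q \<otimes> (e \<otimes> z) = \<zero> \<Longrightarrow> e \<otimes> z = \<zero>"
    and S: "S \<subseteq> carrier L"
  shows "right_mod_iso L S {e \<otimes> b | b. b \<in> S} {q \<otimes> b | b. b \<in> S}"
proof -
  interpret ring L by fact
  have "inj_on (\<lambda>x. q \<otimes> x) ((\<lambda>b. e \<otimes> b) ` S)"
  proof (rule inj_onI, elim imageE)
    fix x y b1 b2
    assume eq: "q \<otimes> x = q \<otimes> y" and x: "x = e \<otimes> b1" "b1 \<in> S" and y: "y = e \<otimes> b2" "b2 \<in> S"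
    then have b: "b1 \<in> carrier L" "b2 \<in> carrier L"
      using S by auto
    have "q \<otimes> (e \<otimes> (b1 \<ominus> b2)) = q \<otimes> x \<ominus> q \<otimes> y"
      using b q e by (simp add: x y a_minus_def r_distr r_minus m_assoc)
    then have "e \<otimes> (b1 \<ominus> b2) = \<zero>"
      using eq b q e by (intro cancel) (simp_all add: x y)
    then have "x \<ominus> y = \<zero>"
      using b e by (simp add: x y a_minus_def r_distr r_minus)
    then show "x = y"
      using b e by (simp add: x y)
  qed
  moreover have "(\<lambda>x. q \<otimes> x) ` (\<lambda>b. e \<otimes> b) ` S = (\<lambda>b. q \<otimes> b) ` S"
    using S q e qe by (auto simp: image_image m_assoc[symmetric] subset_iff)
  moreover have "q \<otimes> (x \<oplus> y) = q \<otimes> x \<oplus> q \<otimes> y" and "q \<otimes> (x \<otimes> b) = q \<otimes> x \<otimes> b"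
    if "x \<in> (\<lambda>b. e \<otimes> b) ` S" "y \<in> (\<lambda>b. e \<otimes> b) ` S" "b \<in> S" for x y b
    using that S q e by (auto simp: r_distr m_assoc subset_iff)
  ultimately show ?thesis
    unfolding right_mod_iso_def setcompr_eq_image Collect_mem_eq bij_betw_def by blast
qed

lemma left_mod_iso_right_mult:
  fixes L (structure)
  assumes "ring L" and p: "p \<in> carrier L" and e: "e \<in> carrier L" and ep: "e \<otimes> p = p"
    and cancel: "\<And>z. z \<in> carrier L \<Longrightarrow> (z \<otimes> e) \<otimes> p = \<zero> \<Longrightarrow> z \<otimes> e = \<zero>"
    and S: "S \<subseteq> carrier L"
  shows "left_mod_iso L S {b \<otimes> e | b. b \<in> S} {b \<otimes> p | b. b \<in> S}"
proof -
  interpret ring L by fact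
  have "inj_on (\<lambda>x. x \<otimes> p) ((\<lambda>b. b \<otimes> e) ` S)"
  proof (rule inj_onI, elim imageE)
    fix x y b1 b2
    assume eq: "x \<otimes> p = y \<otimes> p" and x: "x = b1 \<otimes> e" "b1 \<in> S" and y: "y = b2 \<otimes> e" "b2 \<in> S"
    then have b: "b1 \<in> carrier L" "b2 \<in> carrier L"
      using S by auto
    have "((b1 \<ominus> b2) \<otimes> e) \<otimes> p = x \<otimes> p \<ominus> y \<otimes> p"
      using b p e by (simp add: x y a_minus_def l_distr l_minus m_assoc)
    then have "(b1 \<ominus> b2) \<otimes> e = \<zero>"
      using eq b p e by (intro cancel) (simp_all add: x y)
    then have "x \<ominus> y = \<zero>"
      using b e by (simp add: x y a_minus_def l_distr l_minus)
    then show "x = y"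
      using b e by (simp add: x y)
  qed
  moreover have "(\<lambda>x. x \<otimes> p) ` (\<lambda>b. b \<otimes> e) ` S = (\<lambda>b. b \<otimes> p) ` S"
    using S p e ep by (auto simp: image_image m_assoc subset_iff)
  moreover have "(x \<oplus> y) \<otimes> p = x \<otimes> p \<oplus> y \<otimes> p" and "(b \<otimes> x) \<otimes> p = b \<otimes> (x \<otimes> p)"
    if "x \<in> (\<lambda>b. b \<otimes> e) ` S" "y \<in> (\<lambda>b. b \<otimes> e) ` S" "b \<in> S" for x y b
    using that S p e by (auto simp: l_distr m_assoc subset_iff)
  ultimately show ?thesis
    unfolding left_mod_iso_def setcompr_eq_image Collect_mem_eq bij_betw_def by blast
qed

section \<open>The stretched quiver\<close>

text \<open>\<open>segment \<alpha> i k\<close> is the path \<open>\<alpha>\<^sub>i\<^sub>+\<^sub>1 \<dots> \<alpha>\<^sub>k\<close>, the arrow \<open>\<alpha>\<^sub>l\<close> being encoded as \<open>(\<alpha>, l)\<close>.\<close>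

definition segment :: "'a \<Rightarrow> nat \<Rightarrow> nat \<Rightarrow> ('a \<times> nat) list" where
  "segment \<alpha> i k = map (\<lambda>l. (\<alpha>, l)) [Suc i..<Suc k]"

lemma length_segment [simp]: "length (segment \<alpha> i k) = k - i"
  by (simp add: segment_def del: upt_Suc)

lemma segment_self [simp]: "segment \<alpha> i i = []"
  by (simp add: segment_def)

lemma segment_eq_Nil_iff: "segment \<alpha> i k = [] \<longleftrightarrow> k \<le> i"
  by (simp add: segment_def)

lemma take_segment: "l \<le> k - i \<Longrightarrow> take l (segment \<alpha> i k) = segment \<alpha> i (i + l)"
  by (cases "l = 0") (simp_all add: segment_def take_map take_upt del: upt_Suc)

lemma drop_segment: "drop l (segment \<alpha> i k) = segment \<alpha> (i + l) k"
  by (simp add: segment_def drop_map del: upt_Suc)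

lemma last_segment: "i < k \<Longrightarrow> last (segment \<alpha> i k) = (\<alpha>, k)"
  by (simp add: segment_def last_map)

lemma segment_Suc: "i \<le> k \<Longrightarrow> segment \<alpha> i (Suc k) = segment \<alpha> i k @ [(\<alpha>, Suc k)]"
  by (simp add: segment_def)

lemma segment_append: "i \<le> k \<Longrightarrow> k \<le> m \<Longrightarrow> segment \<alpha> i k @ segment \<alpha> k m = segment \<alpha> i m"
  unfolding segment_def map_append[symmetric]
  by (metis Suc_le_mono le_add_diff_inverse upt_add_eq_append)

locale stretch =
  fixes V :: "'v set" and E :: "'a set" and s t :: "'a \<Rightarrow> 'v" and A :: nat
  assumes finite_V: "finite V" and finite_E: "finite E"
    and sources_in: "s ` E \<subseteq> V" and targets_in: "t ` E \<subseteq> V" and A_pos: "1 \<le> A"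
begin

abbreviation "SV \<equiv> sV A V E"
abbreviation "SE \<equiv> sE A E"
abbreviation "SS \<equiv> ss A s"
abbreviation "ST \<equiv> st A t"

lemma finite_SV: "finite SV"
proof -
  have "{New \<alpha> j | \<alpha> j. \<alpha> \<in> E \<and> 1 \<le> j \<and> j \<le> A - 1} \<subseteq> (\<lambda>(\<alpha>, j). New \<alpha> j) ` (E \<times> {..A})"
    by auto
  then have "finite {New \<alpha> j | \<alpha> j. \<alpha> \<in> E \<and> 1 \<le> j \<and> j \<le> A - 1}"
    by (rule finite_subset) (simp add: finite_E)
  then show ?thesis
    unfolding sV_def using finite_V by simp
qed

lemma Old_in_SV [simp]: "Old v \<in> SV \<longleftrightarrow> v \<in> V"
  by (auto simp: sV_def)

sublocale Q: quiver V E s t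
  by unfold_locales (fact finite_V, fact targets_in)

sublocale SQ: quiver SV SE SS ST
  by unfold_locales (fact finite_SV, use targets_in A_pos in \<open>auto simp: st_def sE_def sV_def\<close>)

text \<open>The vertex \<open>w\<^sub>i\<close> on the path replacing \<open>\<alpha>\<close>, with \<open>w\<^sub>0 = s \<alpha>\<close>.\<close>

definition arrow_vertex :: "'a \<Rightarrow> nat \<Rightarrow> ('v, 'a) svert" where
  "arrow_vertex \<alpha> i = (if i = 0 then Old (s \<alpha>) else New \<alpha> i)"

lemma st_eq: "ST (\<alpha>, k) = (if k = A then Old (t \<alpha>) else New \<alpha> k)"
  by (simp add: st_def)

lemma ss_Suc: "SS (\<alpha>, Suc i) = arrow_vertex \<alpha> i"
  by (simp add: ss_def arrow_vertex_def)

lemma pend_segment: "i < k \<Longrightarrow> pend ST (x, segment \<alpha> i k) = ST (\<alpha>, k)"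
  by (simp add: pend_def segment_eq_Nil_iff last_segment)

lemma pend_inner_segment: "i \<le> k \<Longrightarrow> k < A \<Longrightarrow> 1 \<le> i \<Longrightarrow> pend ST (New \<alpha> i, segment \<alpha> i k) = New \<alpha> k"
  by (cases "i = k") (auto simp: pend_segment st_eq)

lemma pend_segment_to_end: "i < A \<Longrightarrow> pend ST (x, segment \<alpha> i A) = Old (t \<alpha>)"
  by (simp add: pend_segment st_eq)

lemma arrow_vertex_in_SV: "\<alpha> \<in> E \<Longrightarrow> i < A \<Longrightarrow> arrow_vertex \<alpha> i \<in> SV"
  using sources_in by (auto simp: arrow_vertex_def sV_def)

lemma segment_is_path:
  assumes "\<alpha> \<in> E" and "i < A" and "i \<le> k" and "k \<le> A"
  shows "SQ.is_path (arrow_vertex \<alpha> i, segment \<alpha> i k)"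
  using assms(3,4)
proof (induction k)
  case 0
  then show ?case
    using arrow_vertex_in_SV[OF assms(1,2)] by simp
next
  case (Suc k)
  show ?case
  proof (cases "i = Suc k")
    case True
    then show ?thesis
      using arrow_vertex_in_SV[OF assms(1,2)] by simp
  next
    case False
    then have "i \<le> k"
      using Suc.prems by simp
    have "pend ST (arrow_vertex \<alpha> i, segment \<alpha> i k) = arrow_vertex \<alpha> k"
      using \<open>i \<le> k\<close> Suc.prems by (cases "i = k") (simp_all add: pend_segment st_eq arrow_vertex_def)
    moreover have "SQ.is_path (arrow_vertex \<alpha> k, [(\<alpha>, Suc k)])"
    proof -
      have "(\<alpha>, Suc k) \<in> SE"
        using assms(1) Suc.prems by (simp add: sE_def)
      moreover have "arrow_vertex \<alpha> k \<in> SV"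
        using arrow_vertex_in_SV[OF assms(1)] Suc.prems by simp
      ultimately show ?thesis
        using SQ.targets_in by (auto simp: SQ.is_path_Cons ss_Suc)
    qed
    ultimately show ?thesis
      using Suc \<open>i \<le> k\<close> by (simp add: segment_Suc SQ.is_path_append)
  qed
qed

lemma stretch_path_eq: "stretch_path A p = (Old (fst p), concat (map (\<lambda>\<alpha>. segment \<alpha> 0 A) (snd p)))"
  by (simp add: stretch_path_def segment_def)

lemma stretch_path_is_path: "Q.is_path p \<Longrightarrow> SQ.is_path (stretch_path A p)"
proof (induction "snd p" arbitrary: p)
  case Nil
  then show ?case
    by (simp add: stretch_path_eq sV_def valid_path_def)
next
  case (Cons \<alpha> as)
  obtain v where p: "p = (v, \<alpha> # as)"
    using Cons.hyps(2) by (metis prod.collapse)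
  then have "v \<in> V" "\<alpha> \<in> E" "s \<alpha> = v" "Q.is_path (t \<alpha>, as)"
    using Cons.prems by (simp_all add: Q.is_path_Cons)
  moreover have "SQ.is_path (arrow_vertex \<alpha> 0, segment \<alpha> 0 A)"
    using segment_is_path[of \<alpha> 0 A] calculation A_pos by simp
  moreover have "SQ.is_path (stretch_path A (t \<alpha>, as))"
    using Cons.hyps(1)[of "(t \<alpha>, as)"] calculation by simp
  ultimately show ?case
    using A_pos by (simp add: p stretch_path_eq arrow_vertex_def SQ.is_path_append pend_segment_to_end)
qed

lemma stretch_path_last:
  "concat (map (\<lambda>\<alpha>. segment \<alpha> 0 A) as) \<noteq> [] \<Longrightarrow> snd (last (concat (map (\<lambda>\<alpha>. segment \<alpha> 0 A) as))) = A"
proof (induction as)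
  case (Cons \<alpha> as)
  then show ?case
    using A_pos by (cases "concat (map (\<lambda>\<alpha>. segment \<alpha> 0 A) as) = []") (simp_all add: last_segment)
qed simp

lemma theta_eq_0:
  assumes "\<And>p. g p \<noteq> 0 \<Longrightarrow> stretch_path A p \<noteq> q"
  shows "theta A g q = 0"
  using assms unfolding theta_def by (metis (mono_tags, lifting) mem_Collect_eq sum.neutral)

lemma theta_New: "theta A g (New \<beta> i, xs) = 0"
  by (rule theta_eq_0) (simp add: stretch_path_def)

lemma theta_last: "xs \<noteq> [] \<Longrightarrow> snd (last xs) \<noteq> A \<Longrightarrow> theta A g (x, xs) = 0"
  by (rule theta_eq_0) (metis stretch_path_eq snd_conv stretch_path_last)

lemma theta_closed:
  fixes g :: "'v \<times> 'a list \<Rightarrow> 'k::field"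
  assumes g: "g \<in> carrier Q.KQ"
  shows "theta A g \<in> carrier SQ.KQ"
proof -
  have preimage: "\<exists>p. g p \<noteq> 0 \<and> stretch_path A p = q" if "theta A g q \<noteq> 0" for q
    using that theta_eq_0 by blast
  have "{q. theta A g q \<noteq> 0} \<subseteq> stretch_path A ` {p. g p \<noteq> 0}"
    using preimage by blast
  moreover have "finite {p. g p \<noteq> 0}"
    using g unfolding Q.carrier_path_alg by blast
  moreover have "SQ.is_path q" if "theta A g q \<noteq> 0" for q
    using preimage[OF that] g stretch_path_is_path unfolding Q.carrier_path_alg by blast
  ultimately show ?thesis
    unfolding SQ.carrier_path_alg by (meson finite_imageI finite_subset)
qed

section \<open>Quotients by the pieces of a stretched arrow\<close>

text \<open>For \<open>w = w\<^sub>i\<close> on the path replacing \<open>\<alpha>\<close>, \<open>lquot \<alpha> i f\<close> and \<open>rquot \<alpha> i f\<close> are the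
  left quotient of \<open>f\<close> by \<open>q\<^sub>w = \<alpha>\<^sub>i\<^sub>+\<^sub>1 \<dots> \<alpha>\<^sub>A\<close> and the right quotient by
  \<open>p\<^sub>w = \<alpha>\<^sub>1 \<dots> \<alpha>\<^sub>i\<close>: their coefficient at a path \<open>p\<close> is that of \<open>q\<^sub>w p\<close>, resp. \<open>p p\<^sub>w\<close>, in \<open>f\<close>.\<close>

definition lquot :: "'a \<Rightarrow> nat \<Rightarrow> (('v, 'a) svert \<times> ('a \<times> nat) list \<Rightarrow> 'k::field)
    \<Rightarrow> ('v, 'a) svert \<times> ('a \<times> nat) list \<Rightarrow> 'k" where
  "lquot \<alpha> i f = (\<lambda>p. if fst p = Old (t \<alpha>) then f (New \<alpha> i, segment \<alpha> i A @ snd p) else 0)"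

definition rquot :: "'a \<Rightarrow> nat \<Rightarrow> (('v, 'a) svert \<times> ('a \<times> nat) list \<Rightarrow> 'k::field)
    \<Rightarrow> ('v, 'a) svert \<times> ('a \<times> nat) list \<Rightarrow> 'k" where
  "rquot \<alpha> i f = (\<lambda>p. if pend ST p = Old (s \<alpha>) then f (fst p, snd p @ segment \<alpha> 0 i) else 0)"

lemma lquot_mult:
  fixes f g :: "('v, 'a) svert \<times> ('a \<times> nat) list \<Rightarrow> 'k::field"
  assumes "1 \<le> j" and "j < A"
  shows "lquot \<alpha> j (f \<otimes>\<^bsub>SQ.KQ\<^esub> g) = (\<lambda>p. (lquot \<alpha> j f \<otimes>\<^bsub>SQ.KQ\<^esub> g) p +
    (\<Sum>l<A - j. f (New \<alpha> j, segment \<alpha> j (j + l)) * lquot \<alpha> (j + l) g p))"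
proof
  fix p :: "('v, 'a) svert \<times> ('a \<times> nat) list"
  obtain x u where p: "p = (x, u)" by (cases p)
  show "lquot \<alpha> j (f \<otimes>\<^bsub>SQ.KQ\<^esub> g) p = (lquot \<alpha> j f \<otimes>\<^bsub>SQ.KQ\<^esub> g) p +
    (\<Sum>l<A - j. f (New \<alpha> j, segment \<alpha> j (j + l)) * lquot \<alpha> (j + l) g p)"
  proof (cases "x = Old (t \<alpha>)")
    case False
    then show ?thesis
      by (simp add: p lquot_def SQ.mult_path_alg)
  next
    case True
    let ?q = "segment \<alpha> j A"
    have "lquot \<alpha> j (f \<otimes>\<^bsub>SQ.KQ\<^esub> g) p = (f \<otimes>\<^bsub>SQ.KQ\<^esub> g) (New \<alpha> j, ?q @ u)"
      by (simp add: lquot_def p True)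
    also have "\<dots> =
        (\<Sum>k<A - j. f (New \<alpha> j, take k ?q) * g (pend ST (New \<alpha> j, take k ?q), drop k ?q @ u)) +
        (\<Sum>k\<le>length u. f (New \<alpha> j, ?q @ take k u) * g (pend ST (New \<alpha> j, ?q @ take k u), drop k u))"
      by (simp add: SQ.mult_path_alg_append)
    also have "(\<Sum>k<A - j. f (New \<alpha> j, take k ?q) * g (pend ST (New \<alpha> j, take k ?q), drop k ?q @ u)) =
        (\<Sum>l<A - j. f (New \<alpha> j, segment \<alpha> j (j + l)) * lquot \<alpha> (j + l) g p)"
      using assms
      by (intro sum.cong refl) (simp add: take_segment drop_segment pend_inner_segment lquot_def p True)
    also have "(\<Sum>k\<le>length u. f (New \<alpha> j, ?q @ take k u) * g (pend ST (New \<alpha> j, ?q @ take k u), drop k u)) =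
        (lquot \<alpha> j f \<otimes>\<^bsub>SQ.KQ\<^esub> g) p"
      using assms
      by (simp add: p True SQ.mult_path_alg lquot_def pend_append pend_segment_to_end atLeast0AtMost)
    finally show ?thesis
      by (simp add: add.commute)
  qed
qed

lemma rquot_mult:
  fixes f g :: "('v, 'a) svert \<times> ('a \<times> nat) list \<Rightarrow> 'k::field"
  assumes "1 \<le> j" and "j < A"
  shows "rquot \<alpha> j (f \<otimes>\<^bsub>SQ.KQ\<^esub> g) = (\<lambda>p. (f \<otimes>\<^bsub>SQ.KQ\<^esub> rquot \<alpha> j g) p +
    (\<Sum>l\<in>{1..j}. g (New \<alpha> l, segment \<alpha> l j) * rquot \<alpha> l f p))"
proof
  fix p :: "('v, 'a) svert \<times> ('a \<times> nat) list"
  obtain x u where p: "p = (x, u)" by (cases p)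
  show "rquot \<alpha> j (f \<otimes>\<^bsub>SQ.KQ\<^esub> g) p = (f \<otimes>\<^bsub>SQ.KQ\<^esub> rquot \<alpha> j g) p +
    (\<Sum>l\<in>{1..j}. g (New \<alpha> l, segment \<alpha> l j) * rquot \<alpha> l f p)"
  proof (cases "pend ST (x, u) = Old (s \<alpha>)")
    case False
    then show ?thesis
      by (simp add: p rquot_def SQ.mult_path_alg flip: pend_append)
  next
    case True
    let ?r = "segment \<alpha> 0 j"
    let ?T = "\<lambda>k. f (x, u @ take k ?r) * g (pend ST (x, u @ take k ?r), drop k ?r)"
    let ?S = "\<Sum>k<length u. f (x, take k u) * g (pend ST (x, take k u), drop k u @ ?r)"
    have "rquot \<alpha> j (f \<otimes>\<^bsub>SQ.KQ\<^esub> g) p = (f \<otimes>\<^bsub>SQ.KQ\<^esub> g) (x, u @ ?r)"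
      by (simp add: rquot_def p True)
    also have "\<dots> = ?S + (\<Sum>k\<le>j. ?T k)"
      by (simp add: SQ.mult_path_alg_append)
    also have "\<dots> = (?S + ?T 0) + (\<Sum>k\<in>{1..j}. ?T k)"
      by (simp only: sum.atMost_shift sum.atLeast1_atMost_eq One_nat_def add.assoc)
    also have "?S + ?T 0 = (f \<otimes>\<^bsub>SQ.KQ\<^esub> rquot \<alpha> j g) (x, u @ [])"
      unfolding SQ.mult_path_alg_append using True
      by (simp add: rquot_def flip: pend_append)
    also have "(\<Sum>k\<in>{1..j}. ?T k) = (\<Sum>l\<in>{1..j}. g (New \<alpha> l, segment \<alpha> l j) * rquot \<alpha> l f p)"
      using assms True
      by (intro sum.cong refl) (simp add: take_segment drop_segment pend_append pend_segment st_eq rquot_def p)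
    finally show ?thesis
      by (simp add: p)
  qed
qed

definition vanishes_inside_arrows :: "(('v, 'a) svert \<times> ('a \<times> nat) list \<Rightarrow> 'k::field) \<Rightarrow> bool" where
  "vanishes_inside_arrows f \<longleftrightarrow>
     (\<forall>\<alpha> i k. 1 \<le> i \<longrightarrow> i \<le> k \<longrightarrow> k < A \<longrightarrow> f (New \<alpha> i, segment \<alpha> i k) = 0)"

lemma vanishes_inside_arrows_mult:
  fixes f g :: "('v, 'a) svert \<times> ('a \<times> nat) list \<Rightarrow> 'k::field"
  assumes "vanishes_inside_arrows f \<or> vanishes_inside_arrows g"
  shows "vanishes_inside_arrows (f \<otimes>\<^bsub>SQ.KQ\<^esub> g)"
  unfolding vanishes_inside_arrows_def
proof (intro allI impI)
  fix \<alpha> i k assume ik: "1 \<le> i" "i \<le> k" "k < A"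
  have "f (New \<alpha> i, segment \<alpha> i (i + l)) * g (New \<alpha> (i + l), segment \<alpha> (i + l) k) = 0"
    if "l \<le> k - i" for l
    using assms that ik unfolding vanishes_inside_arrows_def by auto
  then show "(f \<otimes>\<^bsub>SQ.KQ\<^esub> g) (New \<alpha> i, segment \<alpha> i k) = 0"
    using ik unfolding SQ.mult_path_alg
    by (intro sum.neutral) (simp add: take_segment drop_segment pend_inner_segment)
qed

lemma lquot_closed:
  fixes f :: "('v, 'a) svert \<times> ('a \<times> nat) list \<Rightarrow> 'k::field"
  assumes f: "f \<in> carrier SQ.KQ" and "i < A"
  shows "lquot \<alpha> i f \<in> carrier SQ.KQ"
proof -
  have "{p. lquot \<alpha> i f p \<noteq> 0} \<subseteq> (\<lambda>q. (Old (t \<alpha>), drop (A - i) (snd q))) ` {p. f p \<noteq> 0}"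
    by (auto simp: lquot_def split: if_splits intro!: image_eqI)
  moreover have "finite {p. f p \<noteq> 0}"
    using f unfolding SQ.carrier_path_alg by blast
  moreover have "SQ.is_path (x, u)" if "lquot \<alpha> i f (x, u) \<noteq> 0" for x u
  proof -
    have "x = Old (t \<alpha>)" and "SQ.is_path (New \<alpha> i, segment \<alpha> i A @ u)"
      using that f unfolding SQ.carrier_path_alg by (auto simp: lquot_def split: if_splits)
    then show ?thesis
      using assms(2) by (simp add: SQ.is_path_append pend_segment_to_end)
  qed
  ultimately show ?thesis
    unfolding SQ.carrier_path_alg by (auto intro: finite_subset)
qed

lemma rquot_closed:
  fixes f :: "('v, 'a) svert \<times> ('a \<times> nat) list \<Rightarrow> 'k::field"
  assumes f: "f \<in> carrier SQ.KQ"
  shows "rquot \<alpha> i f \<in> carrier SQ.KQ"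
proof -
  have "{p. rquot \<alpha> i f p \<noteq> 0} \<subseteq> (\<lambda>q. (fst q, take (length (snd q) - i) (snd q))) ` {p. f p \<noteq> 0}"
    by (auto simp: rquot_def split: if_splits intro!: image_eqI)
  moreover have "finite {p. f p \<noteq> 0}"
    using f unfolding SQ.carrier_path_alg by blast
  moreover have "SQ.is_path (x, u)" if "rquot \<alpha> i f (x, u) \<noteq> 0" for x u
  proof -
    have "SQ.is_path (x, u @ segment \<alpha> 0 i)"
      using that f unfolding SQ.carrier_path_alg by (auto simp: rquot_def split: if_splits)
    then show ?thesis
      by (simp add: SQ.is_path_append)
  qed
  ultimately show ?thesis
    unfolding SQ.carrier_path_alg by (auto intro: finite_subset)
qed

definition quot_stable_part :: "(('v, 'a) svert \<times> ('a \<times> nat) list \<Rightarrow> 'k::field) set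
    \<Rightarrow> (('v, 'a) svert \<times> ('a \<times> nat) list \<Rightarrow> 'k) set" where
  "quot_stable_part K = {f \<in> K. vanishes_inside_arrows f \<and>
     (\<forall>\<alpha> i. 1 \<le> i \<longrightarrow> i < A \<longrightarrow> lquot \<alpha> i f \<in> K \<and> rquot \<alpha> i f \<in> K)}"

lemma lquot_theta: "lquot \<alpha> i (theta A g) = (\<lambda>p. 0)"
  by (simp add: lquot_def theta_New fun_eq_iff)

lemma rquot_theta:
  assumes "1 \<le> i" and "i < A"
  shows "rquot \<alpha> i (theta A g) = (\<lambda>p. 0)"
proof
  fix p :: "('v, 'a) svert \<times> ('a \<times> nat) list"
  have "snd p @ segment \<alpha> 0 i \<noteq> []" and "snd (last (snd p @ segment \<alpha> 0 i)) \<noteq> A"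
    using assms by (simp_all add: segment_eq_Nil_iff last_segment)
  then show "rquot \<alpha> i (theta A g) p = 0"
    by (simp add: rquot_def theta_last)
qed

lemma vanishes_inside_arrows_theta: "vanishes_inside_arrows (theta A g)"
  by (simp add: vanishes_inside_arrows_def theta_New)

context
  fixes K :: "(('v, 'a) svert \<times> ('a \<times> nat) list \<Rightarrow> 'k::field) set"
  assumes K: "ideal K SQ.KQ"
begin

interpretation K: ideal K SQ.KQ
  by (fact K)

lemma quot_stable_part_add:
  assumes "a \<in> quot_stable_part K" and "b \<in> quot_stable_part K"
  shows "a \<oplus>\<^bsub>SQ.KQ\<^esub> b \<in> quot_stable_part K"
proof -
  have "lquot \<alpha> i (a \<oplus>\<^bsub>SQ.KQ\<^esub> b) = lquot \<alpha> i a \<oplus>\<^bsub>SQ.KQ\<^esub> lquot \<alpha> i b"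
    and "rquot \<alpha> i (a \<oplus>\<^bsub>SQ.KQ\<^esub> b) = rquot \<alpha> i a \<oplus>\<^bsub>SQ.KQ\<^esub> rquot \<alpha> i b" for \<alpha> i
    by (simp_all add: lquot_def rquot_def SQ.add_path_alg fun_eq_iff)
  moreover have "vanishes_inside_arrows (a \<oplus>\<^bsub>SQ.KQ\<^esub> b)"
    using assms by (simp add: quot_stable_part_def vanishes_inside_arrows_def SQ.add_path_alg)
  ultimately show ?thesis
    using assms additive_subgroup.a_closed[OF K.is_additive_subgroup]
    unfolding quot_stable_part_def by auto
qed

lemma quot_stable_part_scale:
  assumes "a \<in> quot_stable_part K"
  shows "(\<lambda>p. c * a p) \<in> quot_stable_part K"
proof -
  have "lquot \<alpha> i (\<lambda>p. c * a p) = (\<lambda>p. c * lquot \<alpha> i a p)"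
    and "rquot \<alpha> i (\<lambda>p. c * a p) = (\<lambda>p. c * rquot \<alpha> i a p)" for \<alpha> i
    by (simp_all add: lquot_def rquot_def fun_eq_iff)
  with assms show ?thesis
    unfolding quot_stable_part_def
    by (auto simp: vanishes_inside_arrows_def intro: SQ.ideal_scale_closed[OF K])
qed

lemma quot_stable_part_mult_left:
  assumes a: "a \<in> quot_stable_part K" and x: "x \<in> carrier SQ.KQ"
  shows "x \<otimes>\<^bsub>SQ.KQ\<^esub> a \<in> quot_stable_part K"
proof -
  have aK: "a \<in> K" and a0: "vanishes_inside_arrows a"
    and aq: "\<And>\<alpha> i. 1 \<le> i \<Longrightarrow> i < A \<Longrightarrow> lquot \<alpha> i a \<in> K \<and> rquot \<alpha> i a \<in> K"
    using a unfolding quot_stable_part_def by auto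
  have "lquot \<alpha> i (x \<otimes>\<^bsub>SQ.KQ\<^esub> a) \<in> K" and "rquot \<alpha> i (x \<otimes>\<^bsub>SQ.KQ\<^esub> a) \<in> K"
    if i: "1 \<le> i" "i < A" for \<alpha> i
  proof -
    have "lquot \<alpha> i x \<otimes>\<^bsub>SQ.KQ\<^esub> a \<in> K"
      using aK lquot_closed[OF x i(2)] by (rule K.I_l_closed)
    moreover have "(\<lambda>p. \<Sum>l<A - i. x (New \<alpha> i, segment \<alpha> i (i + l)) * lquot \<alpha> (i + l) a p) \<in> K"
      using i aq by (intro SQ.ideal_lincomb_closed[OF K]) auto
    ultimately have "lquot \<alpha> i x \<otimes>\<^bsub>SQ.KQ\<^esub> a \<oplus>\<^bsub>SQ.KQ\<^esub>
        (\<lambda>p. \<Sum>l<A - i. x (New \<alpha> i, segment \<alpha> i (i + l)) * lquot \<alpha> (i + l) a p) \<in> K"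
      by (rule additive_subgroup.a_closed[OF K.is_additive_subgroup])
    then show "lquot \<alpha> i (x \<otimes>\<^bsub>SQ.KQ\<^esub> a) \<in> K"
      by (simp add: lquot_mult[OF i] SQ.add_path_alg)
    have "(\<Sum>l\<in>{1..i}. a (New \<alpha> l, segment \<alpha> l i) * rquot \<alpha> l x p) = 0" for p
      using a0 i unfolding vanishes_inside_arrows_def by (intro sum.neutral) auto
    then show "rquot \<alpha> i (x \<otimes>\<^bsub>SQ.KQ\<^esub> a) \<in> K"
      using aq[OF i] x by (simp add: rquot_mult[OF i] K.I_l_closed)
  qed
  then show ?thesis
    using a0 aK x by (simp add: quot_stable_part_def vanishes_inside_arrows_mult K.I_l_closed)
qed

lemma quot_stable_part_mult_right:
  assumes a: "a \<in> quot_stable_part K" and x: "x \<in> carrier SQ.KQ"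
  shows "a \<otimes>\<^bsub>SQ.KQ\<^esub> x \<in> quot_stable_part K"
proof -
  have aK: "a \<in> K" and a0: "vanishes_inside_arrows a"
    and aq: "\<And>\<alpha> i. 1 \<le> i \<Longrightarrow> i < A \<Longrightarrow> lquot \<alpha> i a \<in> K \<and> rquot \<alpha> i a \<in> K"
    using a unfolding quot_stable_part_def by auto
  have "lquot \<alpha> i (a \<otimes>\<^bsub>SQ.KQ\<^esub> x) \<in> K" and "rquot \<alpha> i (a \<otimes>\<^bsub>SQ.KQ\<^esub> x) \<in> K"
    if i: "1 \<le> i" "i < A" for \<alpha> i
  proof -
    have "(\<Sum>l<A - i. a (New \<alpha> i, segment \<alpha> i (i + l)) * lquot \<alpha> (i + l) x p) = 0" for p
      using a0 i unfolding vanishes_inside_arrows_def by (intro sum.neutral) auto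
    then show "lquot \<alpha> i (a \<otimes>\<^bsub>SQ.KQ\<^esub> x) \<in> K"
      using aq[OF i] x by (simp add: lquot_mult[OF i] K.I_r_closed)
    have "a \<otimes>\<^bsub>SQ.KQ\<^esub> rquot \<alpha> i x \<in> K"
      using aK rquot_closed[OF x] by (rule K.I_r_closed)
    moreover have "(\<lambda>p. \<Sum>l\<in>{1..i}. x (New \<alpha> l, segment \<alpha> l i) * rquot \<alpha> l a p) \<in> K"
      using i aq by (intro SQ.ideal_lincomb_closed[OF K]) auto
    ultimately have "a \<otimes>\<^bsub>SQ.KQ\<^esub> rquot \<alpha> i x \<oplus>\<^bsub>SQ.KQ\<^esub>
        (\<lambda>p. \<Sum>l\<in>{1..i}. x (New \<alpha> l, segment \<alpha> l i) * rquot \<alpha> l a p) \<in> K"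
      by (rule additive_subgroup.a_closed[OF K.is_additive_subgroup])
    then show "rquot \<alpha> i (a \<otimes>\<^bsub>SQ.KQ\<^esub> x) \<in> K"
      by (simp add: rquot_mult[OF i] SQ.add_path_alg)
  qed
  then show ?thesis
    using a0 aK x by (simp add: quot_stable_part_def vanishes_inside_arrows_mult K.I_r_closed)
qed

lemma ideal_quot_stable_part: "ideal (quot_stable_part K) SQ.KQ"
proof (rule idealI[OF SQ.ring_path_alg])
  have sub: "quot_stable_part K \<subseteq> carrier SQ.KQ"
    using K.a_subset unfolding quot_stable_part_def by auto
  show "subgroup (quot_stable_part K) (add_monoid SQ.KQ)"
  proof (rule group.subgroupI[OF abelian_group.a_group[OF ring.is_abelian_group[OF SQ.ring_path_alg]]])
    have "\<zero>\<^bsub>SQ.KQ\<^esub> \<in> quot_stable_part K"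
      using additive_subgroup.zero_closed[OF K.is_additive_subgroup]
      by (simp add: quot_stable_part_def vanishes_inside_arrows_def lquot_def rquot_def SQ.zero_path_alg)
    then show "quot_stable_part K \<noteq> {}"
      by blast
  next
    fix a assume a: "a \<in> quot_stable_part K"
    have "inv\<^bsub>add_monoid SQ.KQ\<^esub> a = (\<lambda>p. (- 1) * a p)"
      using SQ.a_inv_path_alg a sub by (auto simp: a_inv_def)
    also have "\<dots> \<in> quot_stable_part K"
      by (rule quot_stable_part_scale[OF a])
    finally show "inv\<^bsub>add_monoid SQ.KQ\<^esub> a \<in> quot_stable_part K" .
  qed (use sub quot_stable_part_add in auto)
qed (simp_all add: quot_stable_part_mult_left quot_stable_part_mult_right)

lemma theta_in_quot_stable_part: "theta A g \<in> K \<Longrightarrow> theta A g \<in> quot_stable_part K"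
  using additive_subgroup.zero_closed[OF K.is_additive_subgroup]
  by (simp add: quot_stable_part_def lquot_theta rquot_theta vanishes_inside_arrows_theta SQ.zero_path_alg)

end

lemma ideal_sI: "G \<subseteq> carrier Q.KQ \<Longrightarrow> ideal (sI A V E s t G) SQ.KQ"
  unfolding sI_def sR_def using theta_closed by (blast intro: ring.genideal_ideal[OF SQ.ring_path_alg])

lemma sI_subset_quot_stable_part:
  fixes G :: "('v \<times> 'a list \<Rightarrow> 'k::field) set"
  assumes G: "G \<subseteq> carrier Q.KQ"
  shows "sI A V E s t G \<subseteq> quot_stable_part (sI A V E s t G)"
proof -
  have I: "ideal (sI A V E s t G) SQ.KQ"
    using G by (rule ideal_sI)
  have "theta A ` G \<subseteq> carrier SQ.KQ"
    using G theta_closed by blast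
  then have "theta A ` G \<subseteq> sI A V E s t G"
    unfolding sI_def sR_def by (rule ring.genideal_self[OF SQ.ring_path_alg])
  then have "theta A ` G \<subseteq> quot_stable_part (sI A V E s t G)"
    using theta_in_quot_stable_part[OF I] by blast
  then have "genideal SQ.KQ (theta A ` G) \<subseteq> quot_stable_part (sI A V E s t G)"
    by (rule ring.genideal_minimal[OF SQ.ring_path_alg ideal_quot_stable_part[OF I]])
  then show ?thesis
    by (simp only: sI_def sR_def)
qed

lemma lquot_segment_mult:
  fixes y :: "('v, 'a) svert \<times> ('a \<times> nat) list \<Rightarrow> 'k::field"
  assumes j: "1 \<le> j" "j < A"
  shows "lquot \<alpha> j (pbasis (New \<alpha> j, segment \<alpha> j A) \<otimes>\<^bsub>SQ.KQ\<^esub> y) = pbasis (Old (t \<alpha>), []) \<otimes>\<^bsub>SQ.KQ\<^esub> y"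
proof -
  have quot: "lquot \<alpha> j (pbasis (New \<alpha> j, segment \<alpha> j A)) = (pbasis (Old (t \<alpha>), []) :: _ \<Rightarrow> 'k)"
    by (auto simp: lquot_def pbasis_def fun_eq_iff)
  have zero: "(\<Sum>l<A - j. pbasis (New \<alpha> j, segment \<alpha> j A) (New \<alpha> j, segment \<alpha> j (j + l)) *
      lquot \<alpha> (j + l) y p) = 0" for p
    by (intro sum.neutral) (auto simp: pbasis_def dest!: arg_cong[where f = length])
  show ?thesis
    unfolding lquot_mult[OF j] quot zero by simp
qed

lemma rquot_mult_segment:
  fixes y :: "('v, 'a) svert \<times> ('a \<times> nat) list \<Rightarrow> 'k::field"
  assumes j: "1 \<le> j" "j < A"
  shows "rquot \<alpha> j (y \<otimes>\<^bsub>SQ.KQ\<^esub> pbasis (Old (s \<alpha>), segment \<alpha> 0 j)) = y \<otimes>\<^bsub>SQ.KQ\<^esub> pbasis (Old (s \<alpha>), [])"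
proof -
  have "rquot \<alpha> j (pbasis (Old (s \<alpha>), segment \<alpha> 0 j)) = (pbasis (Old (s \<alpha>), []) :: _ \<Rightarrow> 'k)"
    by (auto simp: rquot_def pbasis_def fun_eq_iff)
  then show ?thesis
    by (simp add: rquot_mult[OF j] pbasis_def)
qed

lemma sI_cancel_left:
  fixes G :: "('v \<times> 'a list \<Rightarrow> 'k::field) set"
  assumes "G \<subseteq> carrier Q.KQ" and j: "1 \<le> j" "j < A" and y: "y \<in> carrier SQ.KQ"
    and "pbasis (New \<alpha> j, segment \<alpha> j A) \<otimes>\<^bsub>SQ.KQ\<^esub> (pbasis (Old (t \<alpha>), []) \<otimes>\<^bsub>SQ.KQ\<^esub> y) \<in> sI A V E s t G"
  shows "pbasis (Old (t \<alpha>), []) \<otimes>\<^bsub>SQ.KQ\<^esub> y \<in> sI A V E s t G"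
proof -
  have "lquot \<alpha> j (pbasis (New \<alpha> j, segment \<alpha> j A) \<otimes>\<^bsub>SQ.KQ\<^esub> (pbasis (Old (t \<alpha>), []) \<otimes>\<^bsub>SQ.KQ\<^esub> y))
      \<in> sI A V E s t G"
    using sI_subset_quot_stable_part assms unfolding quot_stable_part_def by blast
  then have "pbasis (Old (t \<alpha>), []) \<otimes>\<^bsub>SQ.KQ\<^esub> (pbasis (Old (t \<alpha>), []) \<otimes>\<^bsub>SQ.KQ\<^esub> y) \<in> sI A V E s t G"
    by (simp only: lquot_segment_mult[OF j])
  then show ?thesis
    by (simp add: SQ.pbasis_vertex_idem flip: SQ.mult_path_alg_assoc)
qed

lemma sI_cancel_right:
  fixes G :: "('v \<times> 'a list \<Rightarrow> 'k::field) set"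
  assumes "G \<subseteq> carrier Q.KQ" and j: "1 \<le> j" "j < A" and y: "y \<in> carrier SQ.KQ"
    and "(y \<otimes>\<^bsub>SQ.KQ\<^esub> pbasis (Old (s \<alpha>), [])) \<otimes>\<^bsub>SQ.KQ\<^esub> pbasis (Old (s \<alpha>), segment \<alpha> 0 j) \<in> sI A V E s t G"
  shows "y \<otimes>\<^bsub>SQ.KQ\<^esub> pbasis (Old (s \<alpha>), []) \<in> sI A V E s t G"
proof -
  have "rquot \<alpha> j ((y \<otimes>\<^bsub>SQ.KQ\<^esub> pbasis (Old (s \<alpha>), [])) \<otimes>\<^bsub>SQ.KQ\<^esub> pbasis (Old (s \<alpha>), segment \<alpha> 0 j))
      \<in> sI A V E s t G"
    using sI_subset_quot_stable_part assms unfolding quot_stable_part_def by blast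
  then have "(y \<otimes>\<^bsub>SQ.KQ\<^esub> pbasis (Old (s \<alpha>), [])) \<otimes>\<^bsub>SQ.KQ\<^esub> pbasis (Old (s \<alpha>), []) \<in> sI A V E s t G"
    by (simp only: rquot_mult_segment[OF j])
  then show ?thesis
    by (simp add: SQ.pbasis_vertex_idem SQ.mult_path_alg_assoc)
qed

lemma sLam_eq: "sLam A V E s t G = SQ.KQ Quot sI A V E s t G"
  by (simp add: sLam_def sR_def)

lemma scls_eq: "scls A V E s t G p = sI A V E s t G +>\<^bsub>SQ.KQ\<^esub> pbasis p"
  by (simp add: scls_def sR_def)

lemma scls_closed:
  "G \<subseteq> carrier Q.KQ \<Longrightarrow> SQ.is_path p \<Longrightarrow> scls A V E s t G p \<in> carrier (sLam A V E s t G)"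
  unfolding sLam_eq scls_eq
  by (intro ring_hom_closed[OF ideal.rcos_ring_hom[OF ideal_sI]] SQ.pbasis_closed)

lemma right_mod_iso_sLam:
  fixes G :: "('v \<times> 'a list \<Rightarrow> 'k::field) set"
  assumes G: "G \<subseteq> carrier Q.KQ" and \<alpha>: "\<alpha> \<in> E" and j: "1 \<le> j" "j < A"
    and S: "S \<subseteq> carrier (sLam A V E s t G)"
  shows "right_mod_iso (sLam A V E s t G) S
    {scls A V E s t G (Old (t \<alpha>), []) \<otimes>\<^bsub>sLam A V E s t G\<^esub> b | b. b \<in> S}
    {scls A V E s t G (New \<alpha> j, segment \<alpha> j A) \<otimes>\<^bsub>sLam A V E s t G\<^esub> b | b. b \<in> S}"
proof -
  interpret I: ideal "sI A V E s t G" SQ.KQ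
    using ideal_sI[OF G] .
  let ?q = "pbasis (New \<alpha> j, segment \<alpha> j A) :: _ \<Rightarrow> 'k" and ?v = "pbasis (Old (t \<alpha>), []) :: _ \<Rightarrow> 'k"
  have q: "?q \<in> carrier SQ.KQ"
    using segment_is_path[OF \<alpha> j(2), of A] j by (intro SQ.pbasis_closed) (simp add: arrow_vertex_def)
  have v: "?v \<in> carrier SQ.KQ"
    using \<alpha> targets_in by (intro SQ.pbasis_closed) auto
  have "?q \<otimes>\<^bsub>SQ.KQ\<^esub> ?v = ?q"
    unfolding SQ.mult_vertex_right using j by (auto simp: pbasis_def pend_segment_to_end)
  moreover have hom: "(\<lambda>x. sI A V E s t G +>\<^bsub>SQ.KQ\<^esub> x) \<in> ring_hom SQ.KQ (SQ.KQ Quot sI A V E s t G)"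
    by (rule I.rcos_ring_hom)
  ultimately show ?thesis
    unfolding sLam_eq scls_eq using q v S[unfolded sLam_eq]
    by (intro right_mod_iso_left_mult I.quotient_is_ring
          I.quotient_cancel_left[OF q v sI_cancel_left[OF G j]])
       (simp_all add: ring_hom_closed flip: ring_hom_mult)
qed

lemma left_mod_iso_sLam:
  fixes G :: "('v \<times> 'a list \<Rightarrow> 'k::field) set"
  assumes G: "G \<subseteq> carrier Q.KQ" and \<alpha>: "\<alpha> \<in> E" and j: "1 \<le> j" "j < A"
    and S: "S \<subseteq> carrier (sLam A V E s t G)"
  shows "left_mod_iso (sLam A V E s t G) S
    {b \<otimes>\<^bsub>sLam A V E s t G\<^esub> scls A V E s t G (Old (s \<alpha>), []) | b. b \<in> S}
    {b \<otimes>\<^bsub>sLam A V E s t G\<^esub> scls A V E s t G (Old (s \<alpha>), segment \<alpha> 0 j) | b. b \<in> S}"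
proof -
  interpret I: ideal "sI A V E s t G" SQ.KQ
    using ideal_sI[OF G] .
  let ?p = "pbasis (Old (s \<alpha>), segment \<alpha> 0 j) :: _ \<Rightarrow> 'k" and ?v = "pbasis (Old (s \<alpha>), []) :: _ \<Rightarrow> 'k"
  have p: "?p \<in> carrier SQ.KQ"
    using segment_is_path[OF \<alpha>, of 0 j] j by (intro SQ.pbasis_closed) (simp add: arrow_vertex_def)
  have v: "?v \<in> carrier SQ.KQ"
    using \<alpha> sources_in by (intro SQ.pbasis_closed) auto
  have "?v \<otimes>\<^bsub>SQ.KQ\<^esub> ?p = ?p"
    unfolding SQ.mult_vertex_left by (auto simp: pbasis_def)
  moreover have hom: "(\<lambda>x. sI A V E s t G +>\<^bsub>SQ.KQ\<^esub> x) \<in> ring_hom SQ.KQ (SQ.KQ Quot sI A V E s t G)"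
    by (rule I.rcos_ring_hom)
  ultimately show ?thesis
    unfolding sLam_eq scls_eq using p v S[unfolded sLam_eq]
    by (intro left_mod_iso_right_mult I.quotient_is_ring
          I.quotient_cancel_right[OF p v sI_cancel_right[OF G j]])
       (simp_all add: ring_hom_closed flip: ring_hom_mult)
qed

end

theorem proposition1p11:
  fixes V :: "'v set" and E :: "'a set" and s t :: "'a \<Rightarrow> 'v"
    and I G :: "('v \<times> 'a list \<Rightarrow> 'k::field) set"
    and A :: nat and w :: "('v, 'a) svert"
  assumes "finite V" and "finite E" and "s ` E \<subseteq> V" and "t ` E \<subseteq> V"
    and "admissible V E s t I"
    and "finite G" and "\<forall>g\<in>G. uniform V E s t g"
    and "genideal (path_alg V E s t) G = I"
    and "\<forall>H. H \<subset> G \<longrightarrow> genideal (path_alg V E s t) H \<noteq> I"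
    and "1 \<le> A"
    and "w \<in> sV A V E" and "w \<notin> Old ` V"
  shows "let L = sLam A V E s t G;
             cl = scls A V E s t G;
             \<epsilon> = finsum L (\<lambda>u. cl (Old u, [])) V;
             B = {monoid.mult L (monoid.mult L \<epsilon> x) \<epsilon> | x. x \<in> carrier L};
             pw = cl (pw_path A s w);
             qw = cl (qw_path A w);
             v = cl (fst (pw_path A s w), []);
             v' = cl (pend (st A t) (qw_path A w), [])
         in right_mod_iso L B {monoid.mult L v' b | b. b \<in> B} {monoid.mult L qw b | b. b \<in> B}
          \<and> right_mod_iso L (carrier L) {monoid.mult L v' x | x. x \<in> carrier L}
                                        {monoid.mult L qw x | x. x \<in> carrier L}
          \<and> left_mod_iso L B {monoid.mult L b v | b. b \<in> B} {monoid.mult L b pw | b. b \<in> B}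
          \<and> left_mod_iso L (carrier L) {monoid.mult L x v | x. x \<in> carrier L}
                                       {monoid.mult L x pw | x. x \<in> carrier L}"
proof -
  interpret stretch V E s t A
    using assms by unfold_locales
  have G: "G \<subseteq> carrier Q.KQ"
    using assms(7) unfolding uniform_def by blast
  obtain \<alpha> j where w: "w = New \<alpha> j" and \<alpha>: "\<alpha> \<in> E" and j: "1 \<le> j" "j < A"
    using assms(11,12) unfolding sV_def by auto
  let ?L = "sLam A V E s t G" and ?cl = "scls A V E s t G"
  interpret L: ring ?L
    unfolding sLam_eq using ideal_sI[OF G] by (rule ideal.quotient_is_ring)
  define \<epsilon> where "\<epsilon> = finsum ?L (\<lambda>u. ?cl (Old u, [])) V"
  define B where "B = {\<epsilon> \<otimes>\<^bsub>?L\<^esub> x \<otimes>\<^bsub>?L\<^esub> \<epsilon> | x. x \<in> carrier ?L}"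
  have "\<epsilon> \<in> carrier ?L"
    unfolding \<epsilon>_def using scls_closed[OF G] by (intro L.finsum_closed) auto
  then have B: "B \<subseteq> carrier ?L"
    unfolding B_def by auto
  have "pw_path A s w = (Old (s \<alpha>), segment \<alpha> 0 j)" and "qw_path A w = (New \<alpha> j, segment \<alpha> j A)"
    by (simp_all add: pw_path_def qw_path_def w segment_def)
  moreover have "pend (st A t) (New \<alpha> j, segment \<alpha> j A) = Old (t \<alpha>)"
    using j by (simp add: pend_segment_to_end)
  ultimately show ?thesis
    unfolding Let_def \<epsilon>_def[symmetric] B_def[symmetric]
    using right_mod_iso_sLam[OF G \<alpha> j B] right_mod_iso_sLam[OF G \<alpha> j order_refl]
      left_mod_iso_sLam[OF G \<alpha> j B] left_mod_iso_sLam[OF G \<alpha> j order_refl]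
    by simp
qed

end
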